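(* For all $k,l\in\mathbb{Z}$ and all $0<\xi<1$, $s_{k,l}(\xi)>0$.
   Context: For $0<\xi<1$ let $\mu_\xi(\varphi):=\xi^{-2}+(1-\xi^{-2})\cos\varphi$ and define $s_{k,l}(\xi):=\int_0^{2\pi}\int_0^{2\pi}\frac{e^{-ik\varphi}e^{-il\eta}}{(\mu_\xi(\varphi)-\cos\eta)^{1/2}}\,d\eta\,d\varphi$ for $k,l\in\mathbb{Z}$. *)

theory Defs
  imports "HOL-Analysis.Analysis"
begin

definition mu :: "real \<Rightarrow> real \<Rightarrow> real" where
  "mu \<xi> \<phi> = \<xi> powi (-2) + (1 - \<xi> powi (-2)) * cos \<phi>"

text \<open>Iterated Lebesgue (Bochner) integral over [0,2pi] x [0,2pi], complex-valued.
  For 0 < xi < 1 one has mu xi phi - cos eta \<ge> 0, so the real square root is the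
  principal square root.\<close>
definition s :: "int \<Rightarrow> int \<Rightarrow> real \<Rightarrow> complex" where
  "s k l \<xi> =
     (LINT \<phi>:{0..2*pi}|lborel. LINT \<eta>:{0..2*pi}|lborel.
        exp (- \<i> * of_int k * of_real \<phi>) * exp (- \<i> * of_int l * of_real \<eta>)
        / of_real (sqrt (mu \<xi> \<phi> - cos \<eta>)))"

end

theory Submission
  imports Defs
begin

text \<open>Put \<open>a = \<xi> powi -2 > 1\<close>. Then \<open>mu \<xi> \<phi> - cos \<eta> = a - V\<close> with
  \<open>V = (a - 1) cos \<phi> + cos \<eta>\<close> and \<open>\<bar>V\<bar> \<le> a\<close>. Replacing \<open>V\<close> by \<open>r V\<close> with \<open>r < 1\<close>, the binomial
  series of \<open>(a - r V)\<^sup>-\<^sup>1\<^sup>/\<^sup>2\<close> has positive coefficients and converges uniformly, so it may be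
  integrated term by term against \<open>e\<^sup>-\<^sup>i\<^sup>k\<^sup>\<phi> e\<^sup>-\<^sup>i\<^sup>l\<^sup>\<eta>\<close>. Expanding \<open>V\<^sup>n\<close> and the powers of
  cosine binomially shows that every Fourier coefficient of \<open>V\<^sup>n\<close> is a nonnegative real number, and
  the one with \<open>n = |k| + |l|\<close> is positive. Hence the regularised integral is real and bounded
  below by a positive multiple of \<open>r\<^sup>|\<^sup>k\<^sup>|\<^sup>+\<^sup>|\<^sup>l\<^sup>|\<close>. Finally \<open>r \<rightarrow> 1\<close> by dominated convergence:
  \<open>a - V = (a - 1)(1 - cos \<phi>) + (1 - cos \<eta>)\<close>, so by AM-GM the integrand is dominated by
  \<open>1 + ((a - 1)(1 - cos \<phi>))\<^sup>-\<^sup>1\<^sup>/\<^sup>4 (1 - cos \<eta>)\<^sup>-\<^sup>1\<^sup>/\<^sup>4\<close>, which is integrable because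
  \<open>1 - cos x\<close> vanishes only quadratically at \<open>0\<close> and \<open>2\<pi>\<close>.\<close>

section \<open>The zeros of \<open>1 - cos\<close>\<close>

lemma sin_ge_half_self:
  fixes t :: real
  assumes "0 \<le> t" "t \<le> 1"
  shows "t / 2 \<le> sin t"
proof -
  have "cos (pi / 3) < cos 1"
    using pi_gt3 by (subst cos_mono_less_eq) auto
  hence cos1: "1 / 2 < cos (1::real)"
    by (simp add: cos_60)
  have "(\<lambda>x. sin x - x / 2) 0 \<le> (\<lambda>x. sin x - x / 2) t"
  proof (rule DERIV_nonneg_imp_nondecreasing[OF assms(1)])
    fix x assume x: "0 \<le> x" "x \<le> t"
    have "cos 1 \<le> cos x"
      using x assms pi_gt3 by (subst cos_mono_le_eq) auto
    moreover have "DERIV (\<lambda>x. sin x - x / 2) x :> cos x - 1 / 2"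
      by (auto intro!: derivative_eq_intros)
    ultimately show "\<exists>y. DERIV (\<lambda>x. sin x - x / 2) x :> y \<and> 0 \<le> y"
      using cos1 by force
  qed
  thus ?thesis by simp
qed

lemma sin_ge_self_div_pi:
  fixes t :: real
  assumes "0 \<le> t" "t \<le> pi / 2"
  shows "t / pi \<le> sin t"
proof (cases "t \<le> 1")
  case True
  have "t / pi \<le> t / 2"
    using assms pi_gt3 by (intro divide_left_mono) auto
  with sin_ge_half_self[OF assms(1) True] show ?thesis by linarith
next
  case False
  have "1 / 2 \<le> sin (1::real)"
    using sin_ge_half_self[of 1] by simp
  moreover have "sin 1 \<le> sin t"
    using False assms pi_gt3 by (intro sin_monotone_2pi_le) auto
  moreover have "t / pi \<le> 1 / 2"
    using assms by (simp add: field_simps)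
  ultimately show ?thesis by linarith
qed

lemma one_minus_cos_ge_square:
  fixes x :: real
  assumes "0 \<le> x" "x \<le> pi"
  shows "x^2 / (2 * pi^2) \<le> 1 - cos x"
proof -
  have "x / 2 / pi \<le> sin (x / 2)"
    using assms by (intro sin_ge_self_div_pi) auto
  hence "(x / 2 / pi)^2 \<le> sin (x / 2)^2"
    using assms by (intro power_mono) auto
  moreover have "1 - cos x = 2 * sin (x / 2)^2"
    using cos_double_sin[of "x / 2"] by simp
  ultimately show ?thesis
    by (simp add: power_divide)
qed

lemma one_minus_cos_ge_min_square:
  fixes x :: real
  assumes "0 \<le> x" "x \<le> 2 * pi"
  shows "min x (2 * pi - x)^2 / (2 * pi^2) \<le> 1 - cos x"
proof (cases "x \<le> pi")
  case True
  thus ?thesis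
    using one_minus_cos_ge_square[of x] assms by (simp add: min_def)
next
  case False
  have "cos x = cos (2 * pi - x)" by simp
  thus ?thesis
    using one_minus_cos_ge_square[of "2 * pi - x"] assms False by (simp add: min_def)
qed

lemma one_minus_cos_pos:
  fixes x :: real
  assumes "0 < x" "x < 2 * pi"
  shows "0 < 1 - cos x"
proof -
  have "0 < min x (2 * pi - x)^2 / (2 * pi^2)"
    using assms by simp
  also have "\<dots> \<le> 1 - cos x"
    using assms by (intro one_minus_cos_ge_min_square) auto
  finally show ?thesis .
qed

lemma set_integrable_powr_from_0:
  fixes p c :: real
  assumes "p > -1" "c \<ge> 0"
  shows "set_integrable lborel {0..c} (\<lambda>x. x powr p)"
proof -
  have "(\<lambda>x. x powr p) absolutely_integrable_on {0..c}"
    using integrable_on_powr_from_0[OF assms] by (subst absolutely_integrable_on_iff_nonneg) auto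
  thus ?thesis
    unfolding set_integrable_def by (subst (asm) integrable_completion) auto
qed

lemma set_integrable_powr_to:
  fixes p c :: real
  assumes "p > -1" "c \<ge> 0"
  shows "set_integrable lborel {0..c} (\<lambda>x. (c - x) powr p)"
proof -
  have "(\<lambda>x. x powr p) integrable_on cbox 0 c"
    using integrable_on_powr_from_0[OF assms] by simp
  from integrable_affinity[OF this, of "-1" c]
  have "(\<lambda>x. (c - x) powr p) absolutely_integrable_on {0..c}"
    by (subst absolutely_integrable_on_iff_nonneg) auto
  thus ?thesis
    unfolding set_integrable_def by (subst (asm) integrable_completion) auto
qed

lemma one_minus_cos_powr_le:
  fixes x :: real
  assumes "0 \<le> x" "x \<le> 2 * pi"
  shows "(1 - cos x) powr (-1/4)
           \<le> (2 * pi^2) powr (1/4) * (x powr (-1/2) + (2 * pi - x) powr (-1/2))"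
proof (cases "cos x = 1")
  case True
  thus ?thesis by simp
next
  case False
  define m where "m = min x (2 * pi - x)"
  have "x \<noteq> 0" "x \<noteq> 2 * pi"
    using False by auto
  with assms have "m > 0"
    by (simp add: m_def)
  have "(1 - cos x) powr (-1/4) \<le> (m^2 / (2 * pi^2)) powr (-1/4)"
    using one_minus_cos_ge_min_square[OF assms] \<open>m > 0\<close>
    by (intro powr_mono2') (auto simp: m_def)
  also have "\<dots> = (2 * pi^2) powr (1/4) * m powr (-1/2)"
    using \<open>m > 0\<close>
    by (simp add: powr_divide powr_minus_divide powr_powr flip: powr_numeral)
  also have "\<dots> \<le> (2 * pi^2) powr (1/4) * (x powr (-1/2) + (2 * pi - x) powr (-1/2))"
    by (intro mult_left_mono) (auto simp: m_def min_def)
  finally show ?thesis .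
qed

lemma set_integrable_one_minus_cos_powr:
  "set_integrable lborel {0..2 * pi} (\<lambda>x::real. (1 - cos x) powr (-1/4))"
proof -
  let ?g = "\<lambda>x. (2 * pi^2) powr (1/4) * (x powr (-1/2) + (2 * pi - x) powr (-1/2))"
  have "set_integrable lborel {0..2 * pi} ?g"
    using set_integrable_powr_from_0[of "-1/2" "2 * pi"] set_integrable_powr_to[of "-1/2" "2 * pi"]
    by (intro set_integrable_mult_right set_integral_add(1)) auto
  moreover have "set_borel_measurable lborel {0..2 * pi} (\<lambda>x::real. (1 - cos x) powr (-1/4))"
    unfolding set_borel_measurable_def by measurable
  moreover have "AE x \<in> {0..2 * pi} in lborel. norm ((1 - cos x) powr (-1/4)) \<le> norm (?g x)"
    using one_minus_cos_powr_le by (intro AE_I2) auto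
  ultimately show ?thesis
    by (rule set_integrable_bound)
qed

lemma set_integral_norm_le_interval:
  fixes f :: "real \<Rightarrow> 'b::{banach, second_countable_topology}"
  assumes "a \<le> b" "set_integrable lborel {a..b} f" "\<And>x. x \<in> {a..b} \<Longrightarrow> norm (f x) \<le> B"
  shows "norm (LINT x:{a..b}|lborel. f x) \<le> (b - a) * B"
proof -
  have "norm (LINT x:{a..b}|lborel. f x) \<le> (LINT x:{a..b}|lborel. norm (f x))"
    using assms(2) by (rule set_integral_norm_bound)
  also have "\<dots> \<le> (LINT x:{a..b}|lborel. B)"
    using assms borel_integrable_atLeastAtMost'[of a b "\<lambda>_. B"]
    by (intro set_integral_mono set_integrable_norm) auto
  also have "\<dots> = (b - a) * B"
    using assms(1) by (simp add: set_integral_const)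
  finally show ?thesis .
qed

lemma set_integral_sum:
  fixes f :: "'i \<Rightarrow> 'a \<Rightarrow> 'b::{banach, second_countable_topology}"
  assumes "\<And>i. i \<in> I \<Longrightarrow> set_integrable M S (f i)"
  shows "(LINT x:S|M. (\<Sum>i\<in>I. f i x)) = (\<Sum>i\<in>I. LINT x:S|M. f i x)"
proof -
  have "(LINT x:S|M. (\<Sum>i\<in>I. f i x)) = integral\<^sup>L M (\<lambda>x. \<Sum>i\<in>I. indicator S x *\<^sub>R f i x)"
    unfolding set_lebesgue_integral_def by (simp add: scaleR_sum_right)
  also have "\<dots> = (\<Sum>i\<in>I. LINT x:S|M. f i x)"
    unfolding set_lebesgue_integral_def
    by (rule Bochner_Integration.integral_sum) (use assms in \<open>simp add: set_integrable_def\<close>)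
  finally show ?thesis .
qed

lemma set_integral_sums_interval:
  fixes f :: "nat \<Rightarrow> real \<Rightarrow> 'b::{banach, second_countable_topology}"
  assumes "a \<le> b"
    and int: "\<And>i. set_integrable lborel {a..b} (f i)"
    and sums: "\<And>x. x \<in> {a..b} \<Longrightarrow> (\<lambda>i. f i x) sums F x"
    and bound: "\<And>i x. x \<in> {a..b} \<Longrightarrow> norm (f i x) \<le> B i"
    and "summable B"
  shows "(\<lambda>i. LINT x:{a..b}|lborel. f i x) sums (LINT x:{a..b}|lborel. F x)"
proof -
  define g where "g i x = indicator {a..b} x *\<^sub>R f i x" for i x
  have B_nonneg: "0 \<le> B i" for i
    using bound[of a i] assms(1) by (auto intro: order_trans[OF norm_ge_zero])
  have norm_g: "norm (g i x) \<le> B i" for i x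
    using bound[of x i] B_nonneg[of i] by (auto simp: g_def indicator_def)
  have "AE x in lborel. summable (\<lambda>i. norm (g i x))"
    by (intro AE_I2 summable_comparison_test'[OF \<open>summable B\<close>, of 0]) (simp add: norm_g)
  moreover have "summable (\<lambda>i. integral\<^sup>L lborel (\<lambda>x. norm (g i x)))"
  proof (rule summable_comparison_test'[OF summable_mult[OF \<open>summable B\<close>, of "b - a"]])
    fix i
    have "integral\<^sup>L lborel (\<lambda>x. norm (g i x)) = (LINT x:{a..b}|lborel. norm (f i x))"
      unfolding set_lebesgue_integral_def g_def by (simp add: abs_indicator)
    also have "\<dots> \<le> norm (LINT x:{a..b}|lborel. norm (f i x))"
      by simp
    also have "\<dots> \<le> (b - a) * B i"
      using int[of i] bound[of _ i]
      by (intro set_integral_norm_le_interval assms(1)) (auto simp: set_integrable_norm)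
    finally show "norm (integral\<^sup>L lborel (\<lambda>x. norm (g i x))) \<le> (b - a) * B i"
      by simp
  qed
  moreover have "integrable lborel (g i)" for i
    using int[of i] unfolding set_integrable_def g_def .
  ultimately have "(\<lambda>i. integral\<^sup>L lborel (g i)) sums integral\<^sup>L lborel (\<lambda>x. \<Sum>i. g i x)"
    by (intro sums_integral)
  moreover have "(\<Sum>i. g i x) = indicator {a..b} x *\<^sub>R F x" for x
    using sums[of x] by (auto simp: g_def sums_iff indicator_def)
  ultimately show ?thesis
    unfolding set_lebesgue_integral_def g_def by simp
qed

lemma set_integral_dominated_convergence:
  fixes s :: "nat \<Rightarrow> 'a \<Rightarrow> 'b::{banach, second_countable_topology}" and w :: "'a \<Rightarrow> real"
  assumes "set_borel_measurable M S f" "\<And>i. set_borel_measurable M S (s i)"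
    and "set_integrable M S w"
    and lim: "AE x \<in> S in M. (\<lambda>i. s i x) \<longlonglongrightarrow> f x"
    and bound: "\<And>i. AE x \<in> S in M. norm (s i x) \<le> w x"
  shows "(\<lambda>i. LINT x:S|M. s i x) \<longlonglongrightarrow> (LINT x:S|M. f x)"
  unfolding set_lebesgue_integral_def
proof (rule integral_dominated_convergence[where w = "\<lambda>x. indicator S x *\<^sub>R w x"])
  show "(\<lambda>x. indicator S x *\<^sub>R f x) \<in> borel_measurable M"
    "\<And>i. (\<lambda>x. indicator S x *\<^sub>R s i x) \<in> borel_measurable M"
    using assms(1,2) unfolding set_borel_measurable_def by auto
  show "integrable M (\<lambda>x. indicator S x *\<^sub>R w x)"
    using assms(3) unfolding set_integrable_def .
  show "AE x in M. (\<lambda>i. indicator S x *\<^sub>R s i x) \<longlonglongrightarrow> indicator S x *\<^sub>R f x"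
    using lim by eventually_elim (simp split: split_indicator)
  show "AE x in M. norm (indicator S x *\<^sub>R s i x) \<le> indicator S x *\<^sub>R w x" for i
    using bound[of i] by eventually_elim (simp split: split_indicator)
qed

lemma AE_atLeastAtMost_interior: "AE x \<in> {a..b} in lborel. a < x \<and> x < (b::real)"
proof -
  have "AE x in lborel. x \<noteq> a" "AE x in lborel. x \<noteq> b"
    by (rule AE_lborel_singleton)+
  thus ?thesis by eventually_elim auto
qed

section \<open>The binomial series of the inverse square root\<close>

definition inv_sqrt_coeff :: "nat \<Rightarrow> real" where
  "inv_sqrt_coeff n = (real n - 1/2) gchoose n"

lemma inv_sqrt_coeff_pos: "0 < inv_sqrt_coeff n"
proof -
  have "inv_sqrt_coeff n = pochhammer (1/2) n / fact n"
    unfolding inv_sqrt_coeff_def gbinomial_pochhammer' by simp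
  thus ?thesis by (simp add: pochhammer_pos)
qed

lemma gbinomial_minus_half_mult_power:
  fixes t :: real
  shows "((-(1/2)) gchoose n) * (-t)^n = inv_sqrt_coeff n * t^n"
proof -
  have "((-(1/2)::real) gchoose n) = (-1)^n * inv_sqrt_coeff n"
    using gbinomial_minus[of "1/2" n] by (simp add: inv_sqrt_coeff_def)
  moreover have "(-t)^n = (-1)^n * t^n"
    by (rule power_minus)
  moreover have "(-1::real)^n * (-1)^n = 1"
    by (simp flip: power_mult_distrib)
  ultimately show ?thesis
    by (metis mult.assoc mult.left_commute mult_1)
qed

lemma inv_sqrt_coeff_sums:
  assumes "0 \<le> r" "r < 1"
  shows "(\<lambda>n. inv_sqrt_coeff n * r^n) sums ((1 - r) powr (-1/2))"
  using gen_binomial_real[of "-r" "-(1/2)"] assms by (simp add: gbinomial_minus_half_mult_power)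

lemma inv_sqrt_series:
  fixes a t :: real
  assumes "\<bar>t\<bar> < a"
  shows "(\<lambda>n. inv_sqrt_coeff n * a powr (-(1/2) - real n) * t^n) sums (1 / sqrt (a - t))"
proof -
  have "(\<lambda>n. ((-(1/2)) gchoose n) * a powr (-(1/2) - of_nat n) * (-t)^n) sums (a + (-t)) powr (-(1/2))"
    by (rule gen_binomial_real'') (use assms in auto)
  moreover have "(a + (-t)) powr (-(1/2)) = 1 / sqrt (a - t)"
    using assms by (simp add: powr_minus_divide powr_half_sqrt)
  moreover have "((-(1/2)) gchoose n) * a powr (-(1/2) - of_nat n) * (-t)^n
                   = inv_sqrt_coeff n * a powr (-(1/2) - real n) * t^n" for n
  proof -
    have "((-(1/2)) gchoose n) * a powr (-(1/2) - of_nat n) * (-t)^n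
            = (((-(1/2)) gchoose n) * (-t)^n) * a powr (-(1/2) - of_nat n)"
      by (simp only: mult_ac)
    also have "\<dots> = (inv_sqrt_coeff n * t^n) * a powr (-(1/2) - of_nat n)"
      by (simp only: gbinomial_minus_half_mult_power)
    finally show ?thesis
      by (simp only: mult_ac)
  qed
  ultimately show ?thesis
    by (simp only:)
qed

section \<open>Fourier coefficients of powers of cosine\<close>

definition fourier_mode :: "int \<Rightarrow> real \<Rightarrow> complex" where
  "fourier_mode k x = exp (- \<i> * of_int k * of_real x)"

text \<open>Closed form of the integral of \<open>fourier_mode k x * cos x ^ m\<close> over \<open>[0, 2\<pi>]\<close>,
  obtained by expanding \<open>cos x = (e\<^sup>i\<^sup>x + e\<^sup>-\<^sup>i\<^sup>x) / 2\<close> binomially.\<close>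

definition cos_power_fourier :: "nat \<Rightarrow> int \<Rightarrow> real" where
  "cos_power_fourier m k = (\<Sum>j\<le>m. real (m choose j) * (if int (2*j) - int m - k = 0 then 2*pi else 0)) / 2^m"

lemma set_integral_exp_int_multiple:
  fixes n :: int
  shows "(LINT x:{0..2*pi}|lborel. exp (\<i> * of_int n * of_real x)) = (if n = 0 then 2*pi else 0)"
proof (cases "n = 0")
  case True
  thus ?thesis by (simp add: set_integral_const scaleR_conv_of_real)
next
  case False
  define F where "F = (\<lambda>x::real. exp (\<i> * of_int n * of_real x) / (\<i> * of_int n))"
  have "integral\<^sup>L lborel (\<lambda>x. indicator {0 .. 2*pi} x *\<^sub>R exp (\<i> * of_int n * of_real x)) = F (2*pi) - F 0"
  proof (rule integral_FTC_atLeastAtMost)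
    fix x :: real
    have "((\<lambda>z. exp (\<i> * of_int n * z) / (\<i> * of_int n)) has_field_derivative exp (\<i> * of_int n * of_real x)) (at (of_real x))"
      using False by (auto intro!: derivative_eq_intros)
    from has_vector_derivative_real_field[OF this]
    show "(F has_vector_derivative exp (\<i> * of_int n * of_real x)) (at x within {0..2*pi})"
      by (simp add: F_def)
  qed (auto intro!: continuous_intros)
  moreover have "F (2*pi) = F 0"
  proof -
    have "exp (\<i> * of_int n * of_real (2*pi)) = exp (of_int n * (2 * pi * \<i>))"
      by (simp add: mult_ac)
    also have "\<dots> = 1" using exp_2pi_1_int[of n] by (simp add: mult_ac)
    finally show ?thesis by (simp add: F_def)
  qed
  ultimately show ?thesis using False unfolding set_lebesgue_integral_def by simp
qed

lemma fourier_mode_mult_cos_power: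
  "fourier_mode k x * of_real (cos x ^ m) =
     (\<Sum>j\<le>m. of_real (real (m choose j) / 2^m) * exp (\<i> * of_int (int (2*j) - int m - k) * of_real x))"
proof -
  have "of_real (cos x ^ m) = ((exp (\<i> * of_real x) + exp (-(\<i> * of_real x))) / 2) ^ m"
    by (simp add: cos_exp_eq flip: cos_of_real)
  also have "\<dots> = (\<Sum>j\<le>m. of_nat (m choose j) * exp (\<i> * of_real x) ^ j * exp (-(\<i> * of_real x)) ^ (m - j)) / 2^m"
    by (simp add: power_divide binomial_ring)
  finally have cos_power: "of_real (cos x ^ m) = \<dots>" .
  have summand: "fourier_mode k x * (of_nat (m choose j) * exp (\<i> * of_real x) ^ j * exp (-(\<i> * of_real x)) ^ (m - j)) / 2^m
        = of_real (real (m choose j) / 2^m) * exp (\<i> * of_int (int (2*j) - int m - k) * of_real x)"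
    if "j \<in> {..m}" for j
  proof -
    from that have jm: "j \<le> m" by simp
    have "fourier_mode k x * (exp (\<i> * of_real x) ^ j * exp (-(\<i> * of_real x)) ^ (m - j))
        = exp (- \<i> * of_int k * of_real x) * (exp (of_nat j * (\<i> * of_real x)) * exp (of_nat (m - j) * (-(\<i> * of_real x))))"
      unfolding fourier_mode_def exp_of_nat_mult by (rule refl)
    also have "\<dots> = exp (- \<i> * of_int k * of_real x + of_nat j * (\<i> * of_real x) + of_nat (m - j) * (-(\<i> * of_real x)))"
      by (simp only: exp_add mult.assoc)
    also have "- \<i> * of_int k * of_real x + of_nat j * (\<i> * of_real x) + of_nat (m - j) * (-(\<i> * of_real x))
             = \<i> * of_int (int (2*j) - int m - k) * of_real x"
      using jm by (simp add: of_nat_diff algebra_simps)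
    finally show ?thesis by (simp add: field_simps)
  qed
  have "fourier_mode k x * of_real (cos x ^ m) = (\<Sum>j\<le>m. fourier_mode k x * (of_nat (m choose j) * exp (\<i> * of_real x) ^ j * exp (-(\<i> * of_real x)) ^ (m - j)) / 2^m)"
    unfolding cos_power by (simp add: sum_divide_distrib sum_distrib_left)
  also have "\<dots> = (\<Sum>j\<le>m. of_real (real (m choose j) / 2^m) * exp (\<i> * of_int (int (2*j) - int m - k) * of_real x))"
    by (rule sum.cong[OF refl summand])
  finally show ?thesis .
qed

lemma set_integral_fourier_mode_cos_power:
  "(LINT x:{0..2*pi}|lborel. fourier_mode k x * of_real (cos x ^ m)) = of_real (cos_power_fourier m k)"
proof -
  have "(LINT x:{0..2*pi}|lborel. fourier_mode k x * of_real (cos x ^ m))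
      = (\<Sum>j\<le>m. LINT x:{0..2*pi}|lborel. of_real (real (m choose j) / 2^m) * exp (\<i> * of_int (int (2*j) - int m - k) * of_real x))"
    unfolding fourier_mode_mult_cos_power
    by (rule set_integral_sum) (auto intro!: borel_integrable_atLeastAtMost' continuous_intros)
  also have "\<dots> = of_real (cos_power_fourier m k)"
    unfolding set_integral_mult_right set_integral_exp_int_multiple
    by (simp add: cos_power_fourier_def sum_divide_distrib)
  finally show ?thesis .
qed

lemma norm_fourier_mode [simp]: "norm (fourier_mode k x) = 1"
proof -
  have "fourier_mode k x = exp (\<i> * of_real (- (of_int k * x)))" by (simp add: fourier_mode_def mult.assoc)
  thus ?thesis by (simp only: norm_exp_i_times)
qed

lemma continuous_on_fourier_mode [continuous_intros]: "continuous_on S (fourier_mode k)"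
  unfolding fourier_mode_def by (intro continuous_intros)

lemma fourier_mode_measurable [measurable]: "fourier_mode k \<in> borel_measurable borel"
  by (intro borel_measurable_continuous_onI continuous_on_fourier_mode)

lemma cos_power_fourier_nonneg: "0 \<le> cos_power_fourier m k"
  unfolding cos_power_fourier_def by (intro divide_nonneg_nonneg sum_nonneg) auto

lemma cos_power_fourier_pos: "0 < cos_power_fourier (nat \<bar>k\<bar>) k"
proof -
  define m where "m = nat \<bar>k\<bar>"
  define j0 where "j0 = (if k \<ge> 0 then m else 0)"
  have j0: "j0 \<in> {..m}" "int (2*j0) - int m - k = 0"
    by (auto simp: j0_def m_def)
  have "0 < real (m choose j0) * (if int (2*j0) - int m - k = 0 then 2*pi else 0)"
    using j0 by auto
  also have "\<dots> \<le> (\<Sum>j\<le>m. real (m choose j) * (if int (2*j) - int m - k = 0 then 2*pi else 0))"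
    by (rule member_le_sum[OF j0(1)]) auto
  finally show ?thesis unfolding cos_power_fourier_def m_def by simp
qed


section \<open>Series expansion of the regularised integral\<close>

definition cos_mix :: "real \<Rightarrow> real \<Rightarrow> real \<Rightarrow> real" where
  "cos_mix a \<phi> \<eta> = (a - 1) * cos \<phi> + cos \<eta>"

definition s_integrand :: "real \<Rightarrow> int \<Rightarrow> int \<Rightarrow> real \<Rightarrow> real \<Rightarrow> real \<Rightarrow> complex" where
  "s_integrand a k l r \<phi> \<eta> =
     fourier_mode k \<phi> * fourier_mode l \<eta> / of_real (sqrt (a - r * cos_mix a \<phi> \<eta>))"

definition s_reg :: "real \<Rightarrow> int \<Rightarrow> int \<Rightarrow> real \<Rightarrow> complex" where
  "s_reg a k l r = (LINT \<phi>:{0..2*pi}|lborel. LINT \<eta>:{0..2*pi}|lborel. s_integrand a k l r \<phi> \<eta>)"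

lemma s_eq_s_reg:
  assumes "a = \<xi> powi (-2)"
  shows "s k l \<xi> = s_reg a k l 1"
proof -
  have "mu \<xi> \<phi> - cos \<eta> = a - 1 * cos_mix a \<phi> \<eta>" for \<phi> \<eta>
    unfolding mu_def cos_mix_def assms by (simp add: algebra_simps)
  thus ?thesis unfolding s_def s_reg_def s_integrand_def fourier_mode_def by simp
qed

definition expansion_coeff :: "real \<Rightarrow> real \<Rightarrow> nat \<Rightarrow> real" where
  "expansion_coeff a r n = inv_sqrt_coeff n * a powr (-(1/2) - real n) * r^n"

definition s_integrand_term :: "real \<Rightarrow> int \<Rightarrow> int \<Rightarrow> real \<Rightarrow> nat \<Rightarrow> real \<Rightarrow> real \<Rightarrow> complex" where
  "s_integrand_term a k l r n \<phi> \<eta> =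
     of_real (expansion_coeff a r n) * (fourier_mode k \<phi> * (fourier_mode l \<eta> * of_real (cos_mix a \<phi> \<eta> ^ n)))"

definition s_integrand_term_bound :: "real \<Rightarrow> real \<Rightarrow> nat \<Rightarrow> real" where
  "s_integrand_term_bound a r n = inv_sqrt_coeff n * a powr (-(1/2)) * r^n"

definition inner_term :: "real \<Rightarrow> int \<Rightarrow> int \<Rightarrow> real \<Rightarrow> nat \<Rightarrow> real \<Rightarrow> complex" where
  "inner_term a k l r n \<phi> = of_real (expansion_coeff a r n) * (fourier_mode k \<phi> *
     of_real (\<Sum>j\<le>n. real (n choose j) * (a - 1)^j * cos \<phi> ^ j * cos_power_fourier (n - j) l))"

definition cos_mix_power_fourier :: "real \<Rightarrow> int \<Rightarrow> int \<Rightarrow> nat \<Rightarrow> real" where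
  "cos_mix_power_fourier a k l n =
     (\<Sum>j\<le>n. real (n choose j) * (a - 1)^j * cos_power_fourier j k * cos_power_fourier (n - j) l)"

lemma abs_cos_mix_le:
  assumes "a > 1"
  shows "\<bar>cos_mix a \<phi> \<eta>\<bar> \<le> a"
proof -
  have "\<bar>(a - 1) * cos \<phi>\<bar> \<le> a - 1"
    using assms abs_cos_le_one[of \<phi>] by (simp add: abs_mult mult_left_le)
  thus ?thesis
    using abs_cos_le_one[of \<eta>] unfolding cos_mix_def by linarith
qed

lemma s_integrand_term_sums:
  assumes "a > 1" "0 \<le> r" "r < 1"
  shows "(\<lambda>n. s_integrand_term a k l r n \<phi> \<eta>) sums s_integrand a k l r \<phi> \<eta>"
proof -
  let ?V = "cos_mix a \<phi> \<eta>"
  have "\<bar>r * ?V\<bar> \<le> r * a"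
    using abs_cos_mix_le[OF assms(1), of \<phi> \<eta>] assms by (simp add: abs_mult mult_left_mono)
  also have "\<dots> < a"
    using assms by simp
  finally have "(\<lambda>n. inv_sqrt_coeff n * a powr (-(1/2) - real n) * (r * ?V)^n) sums (1 / sqrt (a - r * ?V))"
    by (rule inv_sqrt_series)
  hence "(\<lambda>n. expansion_coeff a r n * ?V ^ n) sums (1 / sqrt (a - r * ?V))"
    by (simp add: expansion_coeff_def power_mult_distrib mult_ac)
  hence "(\<lambda>n. of_real (expansion_coeff a r n * ?V ^ n) :: complex) sums of_real (1 / sqrt (a - r * ?V))"
    by (simp only: sums_of_real_iff)
  hence "(\<lambda>n. (fourier_mode k \<phi> * fourier_mode l \<eta>) * of_real (expansion_coeff a r n * ?V ^ n))
           sums ((fourier_mode k \<phi> * fourier_mode l \<eta>) * of_real (1 / sqrt (a - r * ?V)))"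
    by (rule sums_mult)
  thus ?thesis
    by (simp add: s_integrand_term_def s_integrand_def divide_inverse of_real_inverse mult_ac)
qed

lemma expansion_coeff_nonneg: "a > 0 \<Longrightarrow> 0 \<le> r \<Longrightarrow> 0 \<le> expansion_coeff a r n"
  unfolding expansion_coeff_def using inv_sqrt_coeff_pos[of n] by auto

lemma norm_s_integrand_term_le:
  assumes "a > 1" "0 \<le> r"
  shows "norm (s_integrand_term a k l r n \<phi> \<eta>) \<le> s_integrand_term_bound a r n"
proof -
  have "norm (s_integrand_term a k l r n \<phi> \<eta>) = expansion_coeff a r n * \<bar>cos_mix a \<phi> \<eta>\<bar> ^ n"
    using expansion_coeff_nonneg[of a r n] assms
    by (simp add: s_integrand_term_def norm_mult power_abs norm_power)
  also have "\<dots> \<le> expansion_coeff a r n * a ^ n"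
    using abs_cos_mix_le[OF assms(1)] expansion_coeff_nonneg[of a r n] assms
    by (intro mult_left_mono power_mono) auto
  also have "\<dots> = s_integrand_term_bound a r n"
  proof -
    have "a powr (-(1/2) - real n) * a ^ n = a powr (-(1/2))"
      using assms by (simp add: powr_diff powr_realpow)
    thus ?thesis
      unfolding expansion_coeff_def s_integrand_term_bound_def by (simp add: mult_ac)
  qed
  finally show ?thesis .
qed

lemma summable_s_integrand_term_bound:
  assumes "0 \<le> r" "r < 1"
  shows "summable (s_integrand_term_bound a r)"
proof -
  have "summable (\<lambda>n. inv_sqrt_coeff n * r^n * a powr (-(1/2)))"
    using inv_sqrt_coeff_sums[OF assms] by (intro summable_mult2 sums_summable)
  thus ?thesis
    unfolding s_integrand_term_bound_def by (simp add: mult_ac)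
qed

lemma cos_mix_power_binomial:
  "of_real (cos_mix a \<phi> \<eta> ^ n) =
     (\<Sum>j\<le>n. (of_real (real (n choose j) * (a - 1)^j * cos \<phi> ^ j) :: complex) * of_real (cos \<eta> ^ (n - j)))"
proof -
  have "cos_mix a \<phi> \<eta> ^ n = (\<Sum>j\<le>n. real (n choose j) * ((a - 1) * cos \<phi>)^j * cos \<eta> ^ (n - j))"
    unfolding cos_mix_def by (rule binomial_ring)
  also have "\<dots> = (\<Sum>j\<le>n. (real (n choose j) * (a - 1)^j * cos \<phi> ^ j) * cos \<eta> ^ (n - j))"
    by (simp add: power_mult_distrib mult_ac)
  finally show ?thesis by simp
qed

lemma s_integrand_term_integrable: "set_integrable lborel {0..2*pi} (s_integrand_term a k l r n \<phi>)"
  unfolding s_integrand_term_def cos_mix_def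
  by (rule borel_integrable_atLeastAtMost') (auto intro!: continuous_intros)

lemma set_integral_s_integrand_term:
  "(LINT \<eta>:{0..2*pi}|lborel. s_integrand_term a k l r n \<phi> \<eta>) = inner_term a k l r n \<phi>"
proof -
  define c where "c j = (of_real (real (n choose j) * (a - 1)^j * cos \<phi> ^ j) :: complex)" for j
  have "(LINT \<eta>:{0..2*pi}|lborel. s_integrand_term a k l r n \<phi> \<eta>)
      = of_real (expansion_coeff a r n) * (fourier_mode k \<phi> *
          (LINT \<eta>:{0..2*pi}|lborel. fourier_mode l \<eta> * of_real (cos_mix a \<phi> \<eta> ^ n)))"
    unfolding s_integrand_term_def by simp
  also have "(LINT \<eta>:{0..2*pi}|lborel. fourier_mode l \<eta> * of_real (cos_mix a \<phi> \<eta> ^ n))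
      = (LINT \<eta>:{0..2*pi}|lborel. (\<Sum>j\<le>n. c j * (fourier_mode l \<eta> * of_real (cos \<eta> ^ (n - j)))))"
    unfolding cos_mix_power_binomial c_def by (simp add: sum_distrib_left mult_ac)
  also have "\<dots> = (\<Sum>j\<le>n. LINT \<eta>:{0..2*pi}|lborel. c j * (fourier_mode l \<eta> * of_real (cos \<eta> ^ (n - j))))"
    by (rule set_integral_sum) (auto intro!: borel_integrable_atLeastAtMost' continuous_intros)
  also have "\<dots> = (\<Sum>j\<le>n. c j * of_real (cos_power_fourier (n - j) l))"
    by (simp only: set_integral_mult_right set_integral_fourier_mode_cos_power)
  finally show ?thesis
    unfolding inner_term_def by (simp add: c_def)
qed

lemma inner_term_integrable: "set_integrable lborel {0..2*pi} (inner_term a k l r n)"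
  unfolding inner_term_def by (rule borel_integrable_atLeastAtMost') (auto intro!: continuous_intros)

lemma set_integral_inner_term:
  "(LINT \<phi>:{0..2*pi}|lborel. inner_term a k l r n \<phi>)
     = of_real (expansion_coeff a r n * cos_mix_power_fourier a k l n)"
proof -
  define c where "c j = (of_real (real (n choose j) * (a - 1)^j * cos_power_fourier (n - j) l) :: complex)" for j
  have "inner_term a k l r n \<phi>
          = of_real (expansion_coeff a r n) * (\<Sum>j\<le>n. c j * (fourier_mode k \<phi> * of_real (cos \<phi> ^ j)))" for \<phi>
    unfolding inner_term_def c_def by (simp add: sum_distrib_left mult_ac)
  hence "(LINT \<phi>:{0..2*pi}|lborel. inner_term a k l r n \<phi>)
      = of_real (expansion_coeff a r n) *
          (LINT \<phi>:{0..2*pi}|lborel. (\<Sum>j\<le>n. c j * (fourier_mode k \<phi> * of_real (cos \<phi> ^ j))))"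
    by (simp only: set_integral_mult_right)
  also have "(LINT \<phi>:{0..2*pi}|lborel. (\<Sum>j\<le>n. c j * (fourier_mode k \<phi> * of_real (cos \<phi> ^ j))))
      = (\<Sum>j\<le>n. LINT \<phi>:{0..2*pi}|lborel. c j * (fourier_mode k \<phi> * of_real (cos \<phi> ^ j)))"
    by (rule set_integral_sum) (auto intro!: borel_integrable_atLeastAtMost' continuous_intros)
  also have "\<dots> = (\<Sum>j\<le>n. c j * of_real (cos_power_fourier j k))"
    by (simp only: set_integral_mult_right set_integral_fourier_mode_cos_power)
  also have "\<dots> = of_real (cos_mix_power_fourier a k l n)"
    by (simp add: c_def cos_mix_power_fourier_def mult_ac)
  finally show ?thesis by simp
qed

lemma s_reg_sums:
  assumes "a > 1" "0 \<le> r" "r < 1"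
  shows "(\<lambda>n. of_real (expansion_coeff a r n * cos_mix_power_fourier a k l n)) sums s_reg a k l r"
proof -
  note term_bounds = norm_s_integrand_term_le[OF assms(1,2)] summable_s_integrand_term_bound[OF assms(2,3)]
  have inner: "(\<lambda>n. inner_term a k l r n \<phi>) sums (LINT \<eta>:{0..2*pi}|lborel. s_integrand a k l r \<phi> \<eta>)" for \<phi>
    using set_integral_sums_interval[OF _ s_integrand_term_integrable s_integrand_term_sums[OF assms] term_bounds]
    by (simp add: set_integral_s_integrand_term)
  have "norm (inner_term a k l r n \<phi>) \<le> (2*pi - 0) * s_integrand_term_bound a r n" for n \<phi>
    using set_integral_norm_le_interval[OF _ s_integrand_term_integrable term_bounds(1)]
    by (simp add: set_integral_s_integrand_term)
  with inner have "(\<lambda>n. LINT \<phi>:{0..2*pi}|lborel. inner_term a k l r n \<phi>) sums s_reg a k l r"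
    unfolding s_reg_def
    by (intro set_integral_sums_interval[OF _ inner_term_integrable _ _ summable_mult[OF term_bounds(2)]]) auto
  thus ?thesis
    by (simp only: set_integral_inner_term)
qed

lemma cos_mix_power_fourier_nonneg: "a \<ge> 1 \<Longrightarrow> 0 \<le> cos_mix_power_fourier a k l n"
  unfolding cos_mix_power_fourier_def by (intro sum_nonneg mult_nonneg_nonneg cos_power_fourier_nonneg) auto

lemma cos_mix_power_fourier_pos:
  assumes "a > 1"
  shows "0 < cos_mix_power_fourier a k l (nat \<bar>k\<bar> + nat \<bar>l\<bar>)"
proof -
  define N where "N = nat \<bar>k\<bar> + nat \<bar>l\<bar>"
  have "0 < real (N choose nat \<bar>k\<bar>) * (a - 1)^(nat \<bar>k\<bar>) * cos_power_fourier (nat \<bar>k\<bar>) k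
              * cos_power_fourier (N - nat \<bar>k\<bar>) l"
    using cos_power_fourier_pos[of k] cos_power_fourier_pos[of l] assms by (simp add: N_def)
  also have "\<dots> \<le> cos_mix_power_fourier a k l N"
    unfolding cos_mix_power_fourier_def
    by (rule member_le_sum) (use assms in \<open>auto simp: N_def intro!: mult_nonneg_nonneg cos_power_fourier_nonneg\<close>)
  finally show ?thesis by (simp add: N_def)
qed

section \<open>Dominated convergence as \<open>r \<rightarrow> 1\<close>\<close>

lemma inverse_sqrt_add_le_powr:
  fixes X Y :: real
  assumes "X > 0" "Y > 0"
  shows "1 / sqrt (X + Y) \<le> X powr (-1/4) * Y powr (-1/4)"
proof -
  have "sqrt (X * Y) \<le> (X + Y) / 2"
    using assms by (intro arith_geo_mean_sqrt) auto
  hence "sqrt (X * Y) \<le> X + Y"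
    using assms by simp
  hence "(X + Y) powr (-1/2) \<le> (sqrt (X * Y)) powr (-1/2)"
    using assms by (intro powr_mono2') auto
  also have "(sqrt (X * Y)) powr (-1/2) = X powr (-1/4) * Y powr (-1/4)"
    using assms by (simp add: powr_half_sqrt[symmetric] powr_powr powr_mult)
  finally show ?thesis
    using assms by (simp add: powr_minus_divide powr_half_sqrt)
qed

lemma norm_s_integrand:
  "0 \<le> a - r * cos_mix a \<phi> \<eta> \<Longrightarrow>
     norm (s_integrand a k l r \<phi> \<eta>) = 1 / sqrt (a - r * cos_mix a \<phi> \<eta>)"
  by (simp add: s_integrand_def norm_divide norm_mult)

lemma norm_s_integrand_le:
  assumes "a > 1" "0 \<le> r" "r \<le> 1" "a - cos_mix a \<phi> \<eta> > 0"
  shows "norm (s_integrand a k l r \<phi> \<eta>) \<le> 1 + 1 / sqrt (a - cos_mix a \<phi> \<eta>)"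
proof (cases "cos_mix a \<phi> \<eta> \<ge> 0")
  case True
  have "a - cos_mix a \<phi> \<eta> \<le> a - r * cos_mix a \<phi> \<eta>"
    using True assms mult_right_mono[of r 1 "cos_mix a \<phi> \<eta>"] by simp
  hence "1 / sqrt (a - r * cos_mix a \<phi> \<eta>) \<le> 1 / sqrt (a - cos_mix a \<phi> \<eta>)"
    using assms by (intro divide_left_mono real_sqrt_le_mono mult_pos_pos) auto
  moreover have "0 \<le> a - r * cos_mix a \<phi> \<eta>"
    using \<open>a - cos_mix a \<phi> \<eta> \<le> a - r * cos_mix a \<phi> \<eta>\<close> assms by linarith
  ultimately show ?thesis by (simp add: norm_s_integrand)
next
  case False
  have "1 \<le> a - r * cos_mix a \<phi> \<eta>"
    using False assms mult_nonneg_nonneg[of r "- cos_mix a \<phi> \<eta>"] by simp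
  hence "1 / sqrt (a - r * cos_mix a \<phi> \<eta>) \<le> 1" by simp
  moreover have "0 \<le> 1 / sqrt (a - cos_mix a \<phi> \<eta>)" using assms by simp
  moreover have "norm (s_integrand a k l r \<phi> \<eta>) = 1 / sqrt (a - r * cos_mix a \<phi> \<eta>)"
    using \<open>1 \<le> a - r * cos_mix a \<phi> \<eta>\<close> by (intro norm_s_integrand) linarith
  ultimately show ?thesis by linarith
qed

lemma minus_cos_mix_eq: "a - cos_mix a \<phi> \<eta> = (a - 1) * (1 - cos \<phi>) + (1 - cos \<eta>)"
  unfolding cos_mix_def by (simp add: algebra_simps)

definition s_integrand_majorant :: "real \<Rightarrow> real \<Rightarrow> real \<Rightarrow> real" where
  "s_integrand_majorant a \<phi> \<eta> = 1 + ((a - 1) * (1 - cos \<phi>)) powr (-1/4) * (1 - cos \<eta>) powr (-1/4)"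

lemma cos_mix_less:
  assumes "a > 1" "0 < \<phi>" "\<phi> < 2*pi"
  shows "0 < a - cos_mix a \<phi> \<eta>"
proof -
  have "0 < (a - 1) * (1 - cos \<phi>)"
    using assms one_minus_cos_pos[of \<phi>] by simp
  thus ?thesis
    unfolding minus_cos_mix_eq by (simp add: add_pos_nonneg)
qed

lemma norm_s_integrand_le_majorant:
  assumes "a > 1" "0 \<le> r" "r \<le> 1" "0 < \<phi>" "\<phi> < 2*pi" "0 < \<eta>" "\<eta> < 2*pi"
  shows "norm (s_integrand a k l r \<phi> \<eta>) \<le> s_integrand_majorant a \<phi> \<eta>"
proof -
  have "0 < (a - 1) * (1 - cos \<phi>)" "0 < 1 - cos \<eta>"
    using assms one_minus_cos_pos[of \<phi>] one_minus_cos_pos[of \<eta>] by auto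
  hence "1 / sqrt (a - cos_mix a \<phi> \<eta>) \<le> ((a - 1) * (1 - cos \<phi>)) powr (-1/4) * (1 - cos \<eta>) powr (-1/4)"
    unfolding minus_cos_mix_eq by (rule inverse_sqrt_add_le_powr)
  with norm_s_integrand_le[OF assms(1-3) cos_mix_less[OF assms(1,4,5), of \<eta>], of k l] show ?thesis
    unfolding s_integrand_majorant_def by linarith
qed

lemma set_integral_s_integrand_majorant:
  fixes a \<phi> :: real
  defines "K \<equiv> LINT \<eta>:{0..2*pi}|lborel. (1 - cos \<eta>) powr (-1/4)"
  shows "set_integrable lborel {0..2*pi} (s_integrand_majorant a \<phi>)"
    and "(LINT \<eta>:{0..2*pi}|lborel. s_integrand_majorant a \<phi> \<eta>)
           = 2*pi + ((a - 1) * (1 - cos \<phi>)) powr (-1/4) * K"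
proof -
  have one: "set_integrable lborel {0..2*pi} (\<lambda>_. 1::real)"
    by (rule borel_integrable_atLeastAtMost') simp
  have cos: "set_integrable lborel {0..2*pi}
               (\<lambda>\<eta>. ((a - 1) * (1 - cos \<phi>)) powr (-1/4) * (1 - cos \<eta>) powr (-1/4))"
    by (rule set_integrable_mult_right[OF set_integrable_one_minus_cos_powr])
  show "set_integrable lborel {0..2*pi} (s_integrand_majorant a \<phi>)"
    unfolding s_integrand_majorant_def using one cos by (rule set_integral_add(1))
  show "(LINT \<eta>:{0..2*pi}|lborel. s_integrand_majorant a \<phi> \<eta>)
          = 2*pi + ((a - 1) * (1 - cos \<phi>)) powr (-1/4) * K"
    unfolding s_integrand_majorant_def set_integral_add(2)[OF one cos] set_integral_mult_right K_def
    by (simp add: set_integral_const)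
qed

lemma s_integrand_measurable:
  "set_borel_measurable lborel {0..2*pi} (s_integrand a k l r \<phi>)"
  unfolding set_borel_measurable_def s_integrand_def cos_mix_def by measurable

lemma inner_s_integral_measurable:
  "set_borel_measurable lborel {0..2*pi} (\<lambda>\<phi>. LINT \<eta>:{0..2*pi}|lborel. s_integrand a k l r \<phi> \<eta>)"
  unfolding set_borel_measurable_def s_integrand_def cos_mix_def set_lebesgue_integral_def by measurable

lemma norm_inner_s_integral_le:
  assumes "a > 1" "0 \<le> r" "r \<le> 1" "0 < \<phi>" "\<phi> < 2*pi"
  shows "norm (LINT \<eta>:{0..2*pi}|lborel. s_integrand a k l r \<phi> \<eta>)
           \<le> (LINT \<eta>:{0..2*pi}|lborel. s_integrand_majorant a \<phi> \<eta>)"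
proof -
  have bound: "AE \<eta> \<in> {0..2*pi} in lborel. norm (s_integrand a k l r \<phi> \<eta>) \<le> s_integrand_majorant a \<phi> \<eta>"
    using AE_atLeastAtMost_interior
    by eventually_elim (use assms norm_s_integrand_le_majorant in auto)
  have integrable: "set_integrable lborel {0..2*pi} (s_integrand a k l r \<phi>)"
    using set_integral_s_integrand_majorant(1)[of a \<phi>] s_integrand_measurable
    by (rule set_integrable_bound)
       (use bound in \<open>auto elim!: eventually_mono intro: order_trans[OF _ abs_ge_self]\<close>)
  hence "norm (LINT \<eta>:{0..2*pi}|lborel. s_integrand a k l r \<phi> \<eta>)
           \<le> (LINT \<eta>:{0..2*pi}|lborel. norm (s_integrand a k l r \<phi> \<eta>))"
    by (rule set_integral_norm_bound)
  also have "\<dots> \<le> (LINT \<eta>:{0..2*pi}|lborel. s_integrand_majorant a \<phi> \<eta>)"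
    using integrable set_integral_s_integrand_majorant(1) bound
    by (intro set_integral_mono_AE set_integrable_norm)
  finally show ?thesis .
qed

lemma s_integrand_tendsto:
  assumes "rr \<longlonglongrightarrow> 1" "0 < a - cos_mix a \<phi> \<eta>"
  shows "(\<lambda>m. s_integrand a k l (rr m) \<phi> \<eta>) \<longlonglongrightarrow> s_integrand a k l 1 \<phi> \<eta>"
  unfolding s_integrand_def using assms by (intro tendsto_intros) auto

lemma inner_s_integral_tendsto:
  assumes "a > 1" "0 < \<phi>" "\<phi> < 2*pi" "rr \<longlonglongrightarrow> 1" "\<And>m. 0 \<le> rr m" "\<And>m. rr m \<le> 1"
  shows "(\<lambda>m. LINT \<eta>:{0..2*pi}|lborel. s_integrand a k l (rr m) \<phi> \<eta>)
           \<longlonglongrightarrow> (LINT \<eta>:{0..2*pi}|lborel. s_integrand a k l 1 \<phi> \<eta>)"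
proof (rule set_integral_dominated_convergence[OF s_integrand_measurable s_integrand_measurable
                                                  set_integral_s_integrand_majorant(1)])
  show "AE \<eta> \<in> {0..2*pi} in lborel. (\<lambda>m. s_integrand a k l (rr m) \<phi> \<eta>) \<longlonglongrightarrow> s_integrand a k l 1 \<phi> \<eta>"
    using assms by (intro AE_I2 impI s_integrand_tendsto cos_mix_less)
  show "AE \<eta> \<in> {0..2*pi} in lborel. norm (s_integrand a k l (rr m) \<phi> \<eta>) \<le> s_integrand_majorant a \<phi> \<eta>" for m
    using AE_atLeastAtMost_interior
    by eventually_elim (use assms norm_s_integrand_le_majorant in auto)
qed

lemma s_reg_tendsto:
  assumes "a > 1" "rr \<longlonglongrightarrow> 1" "\<And>m. 0 \<le> rr m" "\<And>m. rr m \<le> 1"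
  shows "(\<lambda>m. s_reg a k l (rr m)) \<longlonglongrightarrow> s_reg a k l 1"
  unfolding s_reg_def
proof (rule set_integral_dominated_convergence[OF inner_s_integral_measurable inner_s_integral_measurable,
                                               where w = "\<lambda>\<phi>. LINT \<eta>:{0..2*pi}|lborel. s_integrand_majorant a \<phi> \<eta>"])
  define K where "K = (LINT \<eta>:{0..2*pi}|lborel. (1 - cos \<eta>) powr (-1/4::real))"
  have "set_integrable lborel {0..2*pi} (\<lambda>\<phi>. 2*pi + ((a - 1) powr (-1/4) * K) * (1 - cos \<phi>) powr (-1/4))"
    by (intro set_integral_add(1) set_integrable_mult_right set_integrable_one_minus_cos_powr
              borel_integrable_atLeastAtMost') auto
  moreover have "(LINT \<eta>:{0..2*pi}|lborel. s_integrand_majorant a \<phi> \<eta>)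
                   = 2*pi + ((a - 1) powr (-1/4) * K) * (1 - cos \<phi>) powr (-1/4)" for \<phi>
    using assms(1) by (simp add: set_integral_s_integrand_majorant(2) K_def powr_mult)
  ultimately show "set_integrable lborel {0..2*pi} (\<lambda>\<phi>. LINT \<eta>:{0..2*pi}|lborel. s_integrand_majorant a \<phi> \<eta>)"
    by simp
  show "AE \<phi> \<in> {0..2*pi} in lborel.
          (\<lambda>m. LINT \<eta>:{0..2*pi}|lborel. s_integrand a k l (rr m) \<phi> \<eta>)
            \<longlonglongrightarrow> (LINT \<eta>:{0..2*pi}|lborel. s_integrand a k l 1 \<phi> \<eta>)"
    using AE_atLeastAtMost_interior
    by eventually_elim (use assms inner_s_integral_tendsto in auto)
  show "AE \<phi> \<in> {0..2*pi} in lborel.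
          norm (LINT \<eta>:{0..2*pi}|lborel. s_integrand a k l (rr m) \<phi> \<eta>)
            \<le> (LINT \<eta>:{0..2*pi}|lborel. s_integrand_majorant a \<phi> \<eta>)" for m
    using AE_atLeastAtMost_interior
    by eventually_elim (use assms norm_inner_s_integral_le in auto)
qed

lemma s_reg_real_ge:
  assumes "a > 1" "0 \<le> r" "r < 1"
  shows "Im (s_reg a k l r) = 0"
    and "expansion_coeff a r N * cos_mix_power_fourier a k l N \<le> Re (s_reg a k l r)"
proof -
  define f where "f n = expansion_coeff a r n * cos_mix_power_fourier a k l n" for n
  have sums: "(\<lambda>n. complex_of_real (f n)) sums s_reg a k l r"
    unfolding f_def by (rule s_reg_sums[OF assms])
  from sums_Im[OF sums] have "(\<lambda>n. 0) sums Im (s_reg a k l r)"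
    by simp
  thus "Im (s_reg a k l r) = 0"
    using sums_zero sums_unique2 by blast
  from sums_Re[OF sums] have "f sums Re (s_reg a k l r)"
    by simp
  moreover have "0 \<le> f n" for n
    unfolding f_def using expansion_coeff_nonneg cos_mix_power_fourier_nonneg assms by simp
  ultimately have "sum f {N} \<le> suminf f"
    by (intro sum_le_suminf) (auto simp: sums_iff)
  thus "f N \<le> Re (s_reg a k l r)"
    using \<open>f sums Re (s_reg a k l r)\<close> by (simp add: sums_iff)
qed

lemma s_reg_one_real_pos:
  assumes "a > 1"
  shows "Im (s_reg a k l 1) = 0" "0 < Re (s_reg a k l 1)"
proof -
  define rr where "rr m = real m / real (Suc m)" for m
  have rr: "0 \<le> rr m" "rr m < 1" for m
    unfolding rr_def by simp_all
  have "rr \<longlonglongrightarrow> 1"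
    unfolding rr_def by (rule LIMSEQ_n_over_Suc_n)
  note lim = s_reg_tendsto[OF assms this rr(1) less_imp_le[OF rr(2)]]
  show "Im (s_reg a k l 1) = 0"
    using tendsto_Im[OF lim] s_reg_real_ge(1)[OF assms rr] by (simp add: LIMSEQ_const_iff)
  define N where "N = nat \<bar>k\<bar> + nat \<bar>l\<bar>"
  have "expansion_coeff a 1 N * cos_mix_power_fourier a k l N \<le> Re (s_reg a k l 1)"
  proof (rule LIMSEQ_le[OF _ tendsto_Re[OF lim]])
    show "(\<lambda>m. expansion_coeff a (rr m) N * cos_mix_power_fourier a k l N)
            \<longlonglongrightarrow> expansion_coeff a 1 N * cos_mix_power_fourier a k l N"
      unfolding expansion_coeff_def by (intro tendsto_intros \<open>rr \<longlonglongrightarrow> 1\<close>)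
    show "\<exists>M. \<forall>m\<ge>M.
            expansion_coeff a (rr m) N * cos_mix_power_fourier a k l N \<le> Re (s_reg a k l (rr m))"
      using s_reg_real_ge(2)[OF assms rr] by blast
  qed
  moreover have "0 < expansion_coeff a 1 N * cos_mix_power_fourier a k l N"
    using inv_sqrt_coeff_pos cos_mix_power_fourier_pos[OF assms] assms
    unfolding expansion_coeff_def N_def by simp
  ultimately show "0 < Re (s_reg a k l 1)"
    by linarith
qed

theorem mainTheorem5:
  fixes k l :: int and \<xi> :: real
  assumes "0 < \<xi>" and "\<xi> < 1"
  shows "s k l \<xi> \<in> \<real> \<and> Re (s k l \<xi>) > 0"
proof -
  define a where "a = \<xi> powi (-2)"
  have "1 < inverse (\<xi>^2)"
    using assms by (simp add: one_less_inverse power_less_one_iff)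
  hence "a > 1"
    unfolding a_def by (simp add: power_int_minus)
  thus ?thesis
    using s_reg_one_real_pos s_eq_s_reg[OF a_def] by (simp add: complex_is_Real_iff)
qed
end
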